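(* Let $n,l$ be positive integers and $p$ a prime such that $p^l$ divides $n$ but $p^{l+1}$ does not divide $n$. Let $S\subseteq\mathbb{Z}_n$ with $0\notin S$, $S=-S$, $|S|=p^l$, such that the circulant graph $\mathrm{Cay}(\mathbb{Z}_n,S)$ is connected. Then $\mathrm{Cay}(\mathbb{Z}_n,S)$ admits a total perfect code if and only if $s\not\equiv s' \pmod{p^l}$ for all distinct $s,s'\in S$.
   Context: $\mathbb{Z}_n$ is the additive group of integers modulo $n$; elements are identified with integers in $\{0,1,\dots,n-1\}$. For an inverse-closed subset $S$ of $\mathbb{Z}_n$ not containing $0$, the circulant graph $\mathrm{Cay}(\mathbb{Z}_n,S)$ has vertex set $\mathbb{Z}_n$, with $u,v$ adjacent iff $v-u\in S$; its degree is $|S|$. A total perfect code in a graph $\Gamma=(V,E)$ is a subset $C\subseteq V$ such that every vertex of $V$ has exactly one neighbour in $C$. *)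

theory Defs
  imports Main "HOL-Computational_Algebra.Primes"
begin

text \<open>Z_n is modelled by the carrier {0..<n} of natural numbers with arithmetic mod n.\<close>

definition circ_adj :: "nat \<Rightarrow> nat set \<Rightarrow> nat \<Rightarrow> nat \<Rightarrow> bool" where
  "circ_adj n S u v \<longleftrightarrow> u < n \<and> v < n \<and> nat ((int v - int u) mod int n) \<in> S"

definition connection_set :: "nat \<Rightarrow> nat set \<Rightarrow> bool" where
  "connection_set n S \<longleftrightarrow> S \<subseteq> {0..<n} \<and> 0 \<notin> S \<and> (\<forall>s\<in>S. (n - s) mod n \<in> S)"

definition circ_connected :: "nat \<Rightarrow> nat set \<Rightarrow> bool" where
  "circ_connected n S \<longleftrightarrow> (\<forall>u<n. \<forall>v<n. (circ_adj n S)\<^sup>*\<^sup>* u v)"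

definition is_total_perfect_code :: "nat \<Rightarrow> nat set \<Rightarrow> nat set \<Rightarrow> bool" where
  "is_total_perfect_code n S C \<longleftrightarrow> C \<subseteq> {0..<n} \<and>
     (\<forall>v<n. \<exists>!c. c \<in> C \<and> circ_adj n S v c)"

end

theory Submission
  imports Defs "HOL-Computational_Algebra.Polynomial" "HOL-Number_Theory.Cong"
begin

text \<open>
  By the symmetry \<open>S = -S\<close>, a total perfect code \<open>C\<close> is the same as a factorisation
  \<open>C \<oplus> S = \<int>\<^sub>n\<close>, and then \<open>|C| = m = n / p\<^sup>l\<close> is prime to \<open>p\<close>. Let \<open>q = p\<^sup>l\<close> and let
  \<open>A\<close>, \<open>B\<close> be the indicator polynomials of \<open>C\<close> and \<open>S\<close>. The factorisation makes
  \<open>A(\<zeta>) B(\<zeta>)\<close> vanish at every nontrivial \<open>n\<close>-th root of unity \<open>\<zeta>\<close>, so every coefficient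
  of \<open>A\<^sup>q B\<close> modulo \<open>X\<^sup>n - 1\<close> equals \<open>A(1)\<^sup>q B(1) / n = m\<^sup>q\<^sup>-\<^sup>1\<close>. On the other hand
  \<open>A\<^sup>q \<equiv> A(X\<^sup>q)\<close> modulo \<open>p\<close>, and the coefficient of \<open>X\<^sup>g\<close> in \<open>A(X\<^sup>q) B\<close> modulo
  \<open>X\<^sup>n - 1\<close> is the number \<open>N\<close> of ways to write \<open>g = qc + s\<close>. Hence \<open>m N \<equiv> m\<^sup>q \<equiv> m\<close>
  modulo \<open>p\<close> by Fermat, so \<open>N \<equiv> 1\<close> and \<open>qC + S\<close> covers \<open>\<int>\<^sub>n\<close>. Reducing modulo \<open>q\<close> (a divisor
  of \<open>n\<close>) shows that \<open>S\<close> meets every residue class modulo \<open>q\<close>, i.e. its elements are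
  pairwise incongruent. Conversely, if they are, the multiples of \<open>q\<close> form a total
  perfect code.
\<close>

lemma dvd_power_diff:
  fixes a b :: "'a::comm_ring_1"
  assumes "d dvd a - b"
  shows "d dvd a ^ e - b ^ e"
proof (cases e)
  case (Suc e')
  then show ?thesis using assms diff_power_eq_sum[of a e' b] by (metis dvd_mult2)
qed simp

lemma prime_dvd_power_add_sub:
  fixes x y :: "'a::comm_ring_1"
  assumes "prime p"
  shows "of_nat p dvd (x + y) ^ p - x ^ p - y ^ p"
proof -
  have p: "0 < p" using assms prime_gt_0_nat by blast
  have "{..p} = insert 0 (insert p {0<..<p})" using p by auto
  then have "(x + y) ^ p = x ^ p + y ^ p + (\<Sum>k\<in>{0<..<p}. of_nat (p choose k) * x ^ k * y ^ (p - k))"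
    using p by (simp add: binomial_ring[of x y p] algebra_simps)
  moreover have "of_nat p dvd (\<Sum>k\<in>{0<..<p}. of_nat (p choose k) * x ^ k * y ^ (p - k))"
  proof (rule dvd_sum)
    fix k assume "k \<in> {0<..<p}"
    then have "p dvd p choose k" using assms by (intro dvd_choose_prime) auto
    then show "of_nat p dvd of_nat (p choose k) * x ^ k * y ^ (p - k)"
      by (metis dvd_def dvd_mult2 of_nat_mult dvd_triv_left)
  qed
  ultimately show ?thesis by simp
qed

lemma prime_dvd_sum_power_sub:
  fixes f :: "'b \<Rightarrow> 'a::comm_ring_1"
  assumes "prime p"
  shows "of_nat p dvd (\<Sum>i\<in>A. f i) ^ p - (\<Sum>i\<in>A. f i ^ p)"
proof (induction A rule: infinite_finite_induct)
  case (insert x F)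
  have "(\<Sum>i\<in>insert x F. f i) ^ p - (\<Sum>i\<in>insert x F. f i ^ p) =
        ((f x + sum f F) ^ p - f x ^ p - sum f F ^ p) + (sum f F ^ p - (\<Sum>i\<in>F. f i ^ p))"
    using insert by simp
  also have "of_nat p dvd \<dots>"
    using insert.IH prime_dvd_power_add_sub[OF assms] by (rule dvd_add[rotated])
  finally show ?case .
qed (use prime_gt_0_nat[OF assms] in \<open>simp_all add: zero_power\<close>)

lemma prime_dvd_sum_prime_power_sub:
  fixes f :: "'b \<Rightarrow> 'a::comm_ring_1"
  assumes "prime p"
  shows "of_nat p dvd (\<Sum>i\<in>A. f i) ^ (p ^ l) - (\<Sum>i\<in>A. f i ^ (p ^ l))"
proof (induction l)
  case (Suc l)
  let ?a = "(\<Sum>i\<in>A. f i) ^ (p ^ l)" and ?b = "\<Sum>i\<in>A. f i ^ (p ^ l)"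
  have "(\<Sum>i\<in>A. f i) ^ (p ^ Suc l) - (\<Sum>i\<in>A. f i ^ (p ^ Suc l)) =
        (?a ^ p - ?b ^ p) + (?b ^ p - (\<Sum>i\<in>A. (f i ^ (p ^ l)) ^ p))"
    by (simp add: power_mult mult.commute flip: power_mult)
  also have "of_nat p dvd \<dots>"
    using dvd_power_diff[OF Suc.IH] prime_dvd_sum_power_sub[OF assms] by (rule dvd_add)
  finally show ?case .
qed simp

lemma power_mod_eq_if_power_eq_1:
  fixes z :: "'a::monoid_mult"
  assumes "z ^ n = 1"
  shows "z ^ (a mod n) = z ^ a"
proof -
  have "z ^ a = (z ^ n) ^ (a div n) * z ^ (a mod n)"
    by (simp flip: power_mult power_add)
  then show ?thesis using assms by simp
qed

definition unity_root :: "nat \<Rightarrow> complex" where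
  "unity_root n = cis (2 * pi / real n)"

lemma unity_root_power: "unity_root n ^ k = cis (2 * pi * real k / real n)"
  by (simp add: unity_root_def DeMoivre mult_ac)

lemma unity_root_power_eq_1_iff:
  assumes "0 < n"
  shows "unity_root n ^ k = 1 \<longleftrightarrow> n dvd k"
proof -
  have n: "unity_root n ^ n = 1"
    using assms by (simp add: unity_root_power complex_eq_iff)
  have inj: "inj_on (\<lambda>k. cis (2 * pi * real k / real n)) {..<n}"
    using bij_betw_roots_unity[OF assms] by (simp add: bij_betw_def)
  have "unity_root n ^ k = 1 \<longleftrightarrow> unity_root n ^ (k mod n) = unity_root n ^ 0"
    using power_mod_eq_if_power_eq_1[OF n] by simp
  also have "\<dots> \<longleftrightarrow> k mod n = 0"
    using inj_onD[OF inj] assms unfolding unity_root_power by fastforce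
  finally show ?thesis by auto
qed

lemma unity_root_power_power_eq_1:
  assumes "0 < n"
  shows "(unity_root n ^ k) ^ n = 1"
  by (metis assms dvd_refl power_mult mult.commute power_one unity_root_power_eq_1_iff)

lemma sum_unity_root_powers:
  assumes "0 < n"
  shows "(\<Sum>i<n. (unity_root n ^ k) ^ i) = (if n dvd k then of_nat n else 0)"
  using unity_root_power_eq_1_iff[OF assms, of k] unity_root_power_power_eq_1[OF assms, of k]
  by (auto simp: geometric_sum)

definition ipoly :: "int poly \<Rightarrow> complex \<Rightarrow> complex" where
  "ipoly Q z = poly (map_poly of_int Q) z"

lemma ipoly_altdef: "ipoly Q z = (\<Sum>j\<le>degree Q. of_int (coeff Q j) * z ^ j)"
  by (simp add: ipoly_def poly_altdef degree_map_poly coeff_map_poly)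

lemma ipoly_of_int: "ipoly Q (of_int x) = of_int (poly Q x)"
  by (simp add: ipoly_altdef poly_altdef)

lemma ipoly_add: "ipoly (P + Q) z = ipoly P z + ipoly Q z"
proof -
  have "map_poly (of_int :: int \<Rightarrow> complex) (P + Q) = map_poly of_int P + map_poly of_int Q"
    by (rule poly_eqI) (simp add: coeff_map_poly)
  then show ?thesis by (simp add: ipoly_def)
qed

lemma ipoly_mult: "ipoly (P * Q) z = ipoly P z * ipoly Q z"
proof -
  have "map_poly (of_int :: int \<Rightarrow> complex) (P * Q) = map_poly of_int P * map_poly of_int Q"
    by (rule poly_eqI) (simp add: coeff_map_poly coeff_mult)
  then show ?thesis by (simp add: ipoly_def)
qed

lemma ipoly_power: "ipoly (Q ^ k) z = ipoly Q z ^ k"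
proof (induction k)
  case 0
  then show ?case by (simp add: ipoly_def)
qed (simp add: ipoly_mult)

lemma ipoly_sum_monom: "ipoly (\<Sum>a\<in>A. monom 1 (f a)) z = (\<Sum>a\<in>A. z ^ f a)"
proof (induction A rule: infinite_finite_induct)
  case (insert a A)
  have "ipoly (monom 1 (f a)) z = z ^ f a"
    by (simp add: ipoly_def map_poly_monom poly_monom)
  then show ?case using insert by (simp add: ipoly_add)
qed (simp_all add: ipoly_def)

text \<open>The coefficient of \<open>X\<^sup>g\<close> in \<open>Q\<close> reduced modulo \<open>X\<^sup>n - 1\<close>.\<close>

definition cyclic_coeff :: "nat \<Rightarrow> int poly \<Rightarrow> nat \<Rightarrow> int" where
  "cyclic_coeff n Q g = (\<Sum>j\<le>degree Q. if j mod n = g then coeff Q j else 0)"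

lemma cyclic_coeff_eq:
  assumes "degree Q \<le> d"
  shows "cyclic_coeff n Q g = (\<Sum>j\<le>d. if j mod n = g then coeff Q j else 0)"
  unfolding cyclic_coeff_def
  using assms by (intro sum.mono_neutral_left) (auto simp: coeff_eq_0)

lemma cyclic_coeff_add: "cyclic_coeff n (P + Q) g = cyclic_coeff n P g + cyclic_coeff n Q g"
proof -
  define d where "d = max (degree P) (degree Q)"
  have "degree (P + Q) \<le> d" "degree P \<le> d" "degree Q \<le> d"
    by (auto simp: d_def degree_add_le)
  then show ?thesis
    by (simp add: cyclic_coeff_eq[of _ d] sum.distrib[symmetric] if_distrib cong: if_cong)
qed

lemma cyclic_coeff_smult: "cyclic_coeff n (smult a Q) g = a * cyclic_coeff n Q g"
  by (simp add: cyclic_coeff_eq[OF degree_smult_le] cyclic_coeff_def sum_distrib_left if_distrib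
      cong: if_cong)

lemma cyclic_coeff_monom: "cyclic_coeff n (monom 1 a) g = (if a mod n = g then 1 else 0)"
proof -
  have "cyclic_coeff n (monom 1 a) g = (\<Sum>j\<le>a. if j = a then (if a mod n = g then 1 else 0) else 0)"
    unfolding cyclic_coeff_def by (intro sum.cong) (auto simp: degree_monom_eq coeff_monom)
  then show ?thesis by simp
qed

lemma cyclic_coeff_sum_monom:
  assumes "finite A"
  shows "cyclic_coeff n (\<Sum>a\<in>A. monom 1 (f a)) g = int (card {a \<in> A. f a mod n = g})"
proof -
  have "cyclic_coeff n (\<Sum>a\<in>A. monom 1 (f a)) g = (\<Sum>a\<in>A. if f a mod n = g then 1 else 0)"
    using assms
  proof (induction A rule: finite_induct)
    case empty
    then show ?case by (simp only: sum.empty cyclic_coeff_def degree_0 coeff_0) simp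
  qed (simp add: cyclic_coeff_add cyclic_coeff_monom)
  also have "\<dots> = int (card {a \<in> A. f a mod n = g})"
    using assms by (simp add: sum.inter_filter[symmetric])
  finally show ?thesis .
qed

lemma dvd_sub_add_iff_mod_eq:
  fixes g j n :: nat
  assumes "g < n"
  shows "n dvd n - g + j \<longleftrightarrow> j mod n = g"
proof -
  have "n dvd n - g + j \<longleftrightarrow> int n dvd (int j - int g) + int n"
    using assms by (simp add: of_nat_diff algebra_simps flip: int_dvd_int_iff)
  also have "\<dots> \<longleftrightarrow> [int j = int g] (mod int n)"
    by (simp add: cong_iff_dvd_diff)
  also have "\<dots> \<longleftrightarrow> [j = g] (mod n)"
    by (rule cong_int_iff)
  also have "\<dots> \<longleftrightarrow> j mod n = g"
    using assms by (simp add: cong_def)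
  finally show ?thesis .
qed

lemma cyclic_coeff_dft:
  assumes "0 < n" "g < n"
  shows "of_nat n * of_int (cyclic_coeff n Q g) =
         (\<Sum>k<n. unity_root n ^ (k * (n - g)) * ipoly Q (unity_root n ^ k))"
proof -
  let ?\<omega> = "unity_root n"
  have "(\<Sum>k<n. ?\<omega> ^ (k * (n - g)) * ipoly Q (?\<omega> ^ k)) =
        (\<Sum>k<n. \<Sum>j\<le>degree Q. of_int (coeff Q j) * (?\<omega> ^ (n - g + j)) ^ k)"
    unfolding ipoly_altdef sum_distrib_left
    by (intro sum.cong refl) (simp add: algebra_simps flip: power_mult power_add)
  also have "\<dots> = (\<Sum>j\<le>degree Q. of_int (coeff Q j) * (\<Sum>k<n. (?\<omega> ^ (n - g + j)) ^ k))"
    by (subst sum.swap) (simp add: sum_distrib_left)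
  also have "\<dots> = of_nat n * of_int (cyclic_coeff n Q g)"
    by (simp add: cyclic_coeff_def sum_unity_root_powers assms dvd_sub_add_iff_mod_eq
        sum_distrib_left if_distrib mult.commute cong: if_cong)
  finally show ?thesis ..
qed

lemma cyclic_coeff_if_dft_vanishes:
  assumes "0 < n" "g < n"
    and vanish: "\<And>k. 0 < k \<Longrightarrow> k < n \<Longrightarrow> ipoly Q (unity_root n ^ k) = 0"
  shows "int n * cyclic_coeff n Q g = poly Q 1"
proof -
  let ?f = "\<lambda>k. unity_root n ^ (k * (n - g)) * ipoly Q (unity_root n ^ k)"
  have "of_int (int n * cyclic_coeff n Q g) = (\<Sum>k<n. ?f k)"
    using cyclic_coeff_dft[OF assms(1,2)] by simp
  also have "\<dots> = ?f 0 + (\<Sum>k\<in>{..<n} - {0}. ?f k)"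
    using assms(1) by (simp add: sum.remove)
  also have "\<dots> = ?f 0"
    using vanish by (simp add: sum.neutral)
  also have "\<dots> = of_int (poly Q 1)"
    using ipoly_of_int[of Q 1] by simp
  finally show ?thesis by (simp only: of_int_eq_iff)
qed

definition tiles :: "nat \<Rightarrow> nat set \<Rightarrow> nat set \<Rightarrow> bool" where
  "tiles n A B \<longleftrightarrow> (\<forall>v<n. \<exists>!x. x \<in> A \<times> B \<and> (fst x + snd x) mod n = v)"

lemma tiles_bij_betw:
  assumes "0 < n" "tiles n A B"
  shows "bij_betw (\<lambda>x. (fst x + snd x) mod n) (A \<times> B) {..<n}"
  unfolding bij_betw_def inj_on_def
proof (intro conjI ballI impI equalityI subsetI)
  fix x y assume "x \<in> A \<times> B" "y \<in> A \<times> B" "(fst x + snd x) mod n = (fst y + snd y) mod n"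
  then show "x = y" using assms unfolding tiles_def by (metis mod_less_divisor)
next
  fix v assume "v \<in> (\<lambda>x. (fst x + snd x) mod n) ` (A \<times> B)"
  then show "v \<in> {..<n}" using assms(1) by auto
next
  fix v assume "v \<in> {..<n}"
  then show "v \<in> (\<lambda>x. (fst x + snd x) mod n) ` (A \<times> B)" using assms(2) unfolding tiles_def by blast
qed

lemma tiles_unity_root_sums_vanish:
  assumes "tiles n A B" "0 < k" "k < n"
  shows "(\<Sum>a\<in>A. (unity_root n ^ k) ^ a) * (\<Sum>b\<in>B. (unity_root n ^ k) ^ b) = 0"
proof -
  let ?z = "unity_root n ^ k"
  have n: "0 < n" using assms by simp
  have "(\<Sum>a\<in>A. ?z ^ a) * (\<Sum>b\<in>B. ?z ^ b) = (\<Sum>x\<in>A \<times> B. ?z ^ ((fst x + snd x) mod n))"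
    by (simp add: sum_product sum.cartesian_product power_add split_beta
        power_mod_eq_if_power_eq_1[OF unity_root_power_power_eq_1[OF n]])
  also have "\<dots> = (\<Sum>v<n. ?z ^ v)"
    by (rule sum.reindex_bij_betw[OF tiles_bij_betw[OF n assms(1)]])
  also have "\<dots> = 0"
    using sum_unity_root_powers[OF n, of k] assms(2,3) by (auto dest: dvd_imp_le)
  finally show ?thesis .
qed

lemma tiles_card_mult:
  assumes "0 < n" "tiles n A B"
  shows "card A * card B = n"
  using bij_betw_same_card[OF tiles_bij_betw[OF assms]] by (simp add: card_cartesian_product)

lemma tiles_cyclic_coeff_power_mult:
  assumes tiles: "tiles n C S" and fin: "finite C" "finite S" and "g < n" "0 < e"
  shows "int n * cyclic_coeff n ((\<Sum>c\<in>C. monom 1 c) ^ e * (\<Sum>s\<in>S. monom 1 s)) g =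
         int (card C) ^ e * int (card S)"
proof -
  let ?A = "\<Sum>c\<in>C. monom (1::int) c" and ?B = "\<Sum>s\<in>S. monom (1::int) s"
  have "int n * cyclic_coeff n (?A ^ e * ?B) g = poly (?A ^ e * ?B) 1"
  proof (rule cyclic_coeff_if_dft_vanishes)
    fix k assume "0 < k" "k < n"
    then have "ipoly ?A (unity_root n ^ k) * ipoly ?B (unity_root n ^ k) = 0"
      using tiles_unity_root_sums_vanish[OF tiles] by (simp add: ipoly_sum_monom)
    then show "ipoly (?A ^ e * ?B) (unity_root n ^ k) = 0"
      using \<open>0 < e\<close> by (auto simp: ipoly_mult ipoly_power)
  qed (use \<open>g < n\<close> in auto)
  also have "\<dots> = int (card C) ^ e * int (card S)"
    using fin by (simp add: poly_sum poly_monom)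
  finally show ?thesis .
qed

lemma cyclic_coeff_dilated_mult:
  assumes "finite C" "finite S"
  shows "cyclic_coeff n ((\<Sum>c\<in>C. monom 1 (q * c)) * (\<Sum>s\<in>S. monom 1 s)) g =
         int (card {x \<in> C \<times> S. (q * fst x + snd x) mod n = g})"
proof -
  have "(\<Sum>c\<in>C. monom 1 (q * c)) * (\<Sum>s\<in>S. monom 1 s) =
        (\<Sum>x\<in>C \<times> S. monom (1::int) (q * fst x + snd x))"
    by (simp add: sum_product sum.cartesian_product mult_monom split_beta)
  then show ?thesis
    using assms by (simp add: cyclic_coeff_sum_monom)
qed

lemma tiles_dilated_fibre_card_cong:
  fixes C S :: "nat set"
  assumes p: "prime p" and coprime: "\<not> p dvd n div p ^ l"
    and tiles: "tiles n C S" and fin: "finite C" "finite S" and card_S: "card S = p ^ l"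
    and g: "g < n"
  shows "[card {x \<in> C \<times> S. (p ^ l * fst x + snd x) mod n = g} = 1] (mod p)"
proof -
  define q where "q = p ^ l"
  define N where "N = card {x \<in> C \<times> S. (q * fst x + snd x) mod n = g}"
  define m where "m = card C"
  define A where "A = (\<Sum>c\<in>C. monom (1::int) c)"
  define B where "B = (\<Sum>s\<in>S. monom (1::int) s)"
  have q0: "0 < q" using p by (simp add: q_def prime_gt_0_nat)
  have "m * q = n"
    using tiles_card_mult[OF _ tiles] g card_S by (simp add: m_def q_def)
  then have coprime_m: "\<not> int p dvd int m" using coprime q0 by (auto simp: q_def)
  have "of_nat p dvd A ^ q - (\<Sum>c\<in>C. monom 1 (q * c))"
    using prime_dvd_sum_prime_power_sub[OF p, of "\<lambda>c. monom (1::int) c" C l]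
    by (simp add: A_def q_def monom_power mult.commute)
  then obtain R where R: "A ^ q = (\<Sum>c\<in>C. monom 1 (q * c)) + smult (int p) R"
    by (auto simp: dvd_def of_nat_poly diff_eq_eq add.commute)
  have dft: "int n * cyclic_coeff n (A ^ q * B) g = int m ^ q * int q"
    using tiles_cyclic_coeff_power_mult[OF tiles fin g q0] card_S by (simp add: A_def B_def m_def q_def)
  have "A ^ q * B = (\<Sum>c\<in>C. monom 1 (q * c)) * B + smult (int p) (R * B)"
    by (simp add: R distrib_right)
  then have "cyclic_coeff n (A ^ q * B) g = int N + int p * cyclic_coeff n (R * B) g"
    using fin by (simp add: B_def N_def cyclic_coeff_add cyclic_coeff_smult cyclic_coeff_dilated_mult)
  with dft \<open>m * q = n\<close> have "int q * int m ^ q = int q * (int m * (int N + int p * cyclic_coeff n (R * B) g))"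
    by (auto simp: algebra_simps)
  then have "int m ^ q = int m * (int N + int p * cyclic_coeff n (R * B) g)"
    using q0 by simp
  then have "int m * (int N - 1) = (int m ^ q - int m) - int p * (int m * cyclic_coeff n (R * B) g)"
    by (simp add: algebra_simps)
  moreover have "int p dvd int m ^ q - int m"
    using prime_dvd_sum_prime_power_sub[OF p, of "\<lambda>_. 1::int" "{..<m}" l] by (simp add: q_def)
  ultimately have "int p dvd int m * (int N - 1)"
    by (simp add: dvd_diff)
  then have "int p dvd int N - 1"
    using p coprime_m by (simp add: prime_dvd_mult_iff)
  then show ?thesis
    by (simp add: N_def q_def cong_iff_dvd_diff flip: cong_int_iff)
qed

lemma tiles_dilated_covers:
  fixes C S :: "nat set"
  assumes "prime p" "\<not> p dvd n div p ^ l"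
    and "tiles n C S" "finite C" "finite S" "card S = p ^ l" "g < n"
  shows "\<exists>c\<in>C. \<exists>s\<in>S. (p ^ l * c + s) mod n = g"
proof (rule ccontr)
  assume "\<not> ?thesis"
  then have "{x \<in> C \<times> S. (p ^ l * fst x + snd x) mod n = g} = {}" by auto
  then have "[0 = 1] (mod p)" using tiles_dilated_fibre_card_cong[OF assms] by (metis card.empty)
  then show False using \<open>prime p\<close> by (simp add: cong_0_1_nat')
qed

lemma inj_on_mod_if_dilated_covers:
  assumes "0 < n" "q dvd n" "finite S" "card S = q"
    and covers: "\<And>g. g < n \<Longrightarrow> \<exists>c. \<exists>s\<in>S. (q * c + s) mod n = g"
  shows "inj_on (\<lambda>s. s mod q) S"
proof (rule eq_card_imp_inj_on)
  have "{..<q} \<subseteq> (\<lambda>s. s mod q) ` S"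
  proof
    fix r assume "r \<in> {..<q}"
    moreover have "q \<le> n" using assms(1,2) by (simp add: dvd_imp_le)
    ultimately obtain c s where "s \<in> S" "(q * c + s) mod n = r" using covers[of r] by auto
    have "r = (q * c + s) mod n mod q"
      using \<open>r \<in> {..<q}\<close> \<open>(q * c + s) mod n = r\<close> by simp
    then have "s mod q = r"
      using \<open>q dvd n\<close> by (simp add: mod_mod_cancel)
    with \<open>s \<in> S\<close> show "r \<in> (\<lambda>s. s mod q) ` S" by blast
  qed
  then have "q \<le> card ((\<lambda>s. s mod q) ` S)"
    using assms(3) by (metis card_lessThan card_mono finite_imageI)
  then show "card ((\<lambda>s. s mod q) ` S) = card S"
    using assms(3,4) card_image_le le_antisym by blast
qed (fact assms)

lemma circ_adj_iff:
  assumes "u < n" "v < n" "S \<subseteq> {0..<n}"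
  shows "circ_adj n S u v \<longleftrightarrow> (\<exists>s\<in>S. (u + s) mod n = v)"
proof
  assume "circ_adj n S u v"
  then have "nat ((int v - int u) mod int n) \<in> S" by (simp add: circ_adj_def)
  moreover have "(u + nat ((int v - int u) mod int n)) mod n = v"
  proof -
    have "int ((u + nat ((int v - int u) mod int n)) mod n) = (int u + (int v - int u)) mod int n"
      using assms(1) by (simp add: zmod_int mod_add_right_eq)
    then show ?thesis using assms(2) by simp
  qed
  ultimately show "\<exists>s\<in>S. (u + s) mod n = v" by blast
next
  assume "\<exists>s\<in>S. (u + s) mod n = v"
  then obtain s where s: "s \<in> S" "(u + s) mod n = v" by blast
  then have "(int v - int u) mod int n = int s"
    using assms by (auto simp: zmod_int mod_diff_left_eq simp flip: s(2))
  then show "circ_adj n S u v" using s assms by (simp add: circ_adj_def)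
qed

lemma mod_add_sub_cancel:
  fixes x s n :: nat
  assumes "s \<le> n"
  shows "((x + s) mod n + (n - s) mod n) mod n = x mod n"
proof -
  have "((x + s) mod n + (n - s) mod n) mod n = (x + s + (n - s)) mod n"
    by (simp add: mod_add_eq)
  also have "x + s + (n - s) = x + n" using assms by simp
  finally show ?thesis by simp
qed

lemma total_perfect_code_unique_neighbour:
  assumes "S \<subseteq> {0..<n}" "is_total_perfect_code n S C" "v < n"
  shows "\<exists>!c. c \<in> C \<and> (\<exists>s\<in>S. (v + s) mod n = c)"
proof -
  have C: "C \<subseteq> {0..<n}" using assms(2) by (simp add: is_total_perfect_code_def)
  have "circ_adj n S v c \<longleftrightarrow> (\<exists>s\<in>S. (v + s) mod n = c)" if "c \<in> C" for c
    using circ_adj_iff[OF assms(3) _ assms(1)] C that by (meson atLeastLessThan_iff subsetD)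
  then have "c \<in> C \<and> circ_adj n S v c \<longleftrightarrow> c \<in> C \<and> (\<exists>s\<in>S. (v + s) mod n = c)" for c
    by blast
  moreover have "\<exists>!c. c \<in> C \<and> circ_adj n S v c"
    using assms(2,3) by (simp add: is_total_perfect_code_def)
  ultimately show ?thesis by simp
qed

lemma total_perfect_code_tiles:
  assumes "connection_set n S" and "is_total_perfect_code n S C"
  shows "tiles n C S"
  unfolding tiles_def
proof (intro allI impI)
  fix v assume v: "v < n"
  have S: "S \<subseteq> {0..<n}" and neg: "\<And>s. s \<in> S \<Longrightarrow> (n - s) mod n \<in> S"
    using assms(1) by (auto simp: connection_set_def)
  have C: "C \<subseteq> {0..<n}" using assms(2) by (simp add: is_total_perfect_code_def)
  obtain c s where cs: "c \<in> C" "s \<in> S" "(v + s) mod n = c"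
    and unique: "\<And>c'. c' \<in> C \<Longrightarrow> \<exists>s\<in>S. (v + s) mod n = c' \<Longrightarrow> c' = c"
    using total_perfect_code_unique_neighbour[OF S assms(2) v] by blast
  have "s \<le> n" using cs S by auto
  let ?s = "(n - s) mod n"
  show "\<exists>!x. x \<in> C \<times> S \<and> (fst x + snd x) mod n = v"
  proof (rule ex1I[of _ "(c, ?s)"])
    show "(c, ?s) \<in> C \<times> S \<and> (fst (c, ?s) + snd (c, ?s)) mod n = v"
      using cs neg mod_add_sub_cancel[OF \<open>s \<le> n\<close>, of v] v by simp
  next
    fix x assume x: "x \<in> C \<times> S \<and> (fst x + snd x) mod n = v"
    then obtain c' s' where x': "x = (c', s')" "c' \<in> C" "s' \<in> S" "(c' + s') mod n = v"
      by (cases x) auto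
    have "s' \<le> n" "c' < n" using x' S C by auto
    then have "(v + (n - s') mod n) mod n = c'"
      using mod_add_sub_cancel[of s' n c'] x'(4) by simp
    then have "c' = c" using unique x'(2) neg[OF x'(3)] by blast
    then have "[c + s' = c + ?s] (mod n)"
      using x'(4) mod_add_sub_cancel[OF \<open>s \<le> n\<close>, of v] cs(3) v by (simp add: cong_def)
    then have "[s' = ?s] (mod n)"
      using cong_add_lcancel_nat by blast
    then have "s' = ?s"
      using x'(3) S by (auto simp: cong_def)
    then show "x = (c, ?s)" using x' \<open>c' = c\<close> by simp
  qed
qed

lemma multiples_total_perfect_code:
  assumes S: "S \<subseteq> {0..<n}" and q: "0 < q" "q dvd n"
    and inj: "inj_on (\<lambda>s. s mod q) S" and card_S: "card S = q"
  shows "is_total_perfect_code n S {c. c < n \<and> q dvd c}"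
  unfolding is_total_perfect_code_def
proof (intro conjI allI impI)
  show "{c. c < n \<and> q dvd c} \<subseteq> {0..<n}" by auto
next
  fix v assume v: "v < n"
  have "(\<lambda>s. s mod q) ` S = {..<q}"
    using card_image[OF inj] card_S q(1) by (intro card_subset_eq) auto
  then obtain s where s: "s \<in> S" "s mod q = (q - v mod q) mod q"
    by (metis (no_types, lifting) imageE lessThan_iff mod_less_divisor q(1))
  have "(v + s) mod q = (v mod q + (q - v mod q)) mod q"
    using s(2) by (metis mod_add_left_eq mod_add_right_eq)
  then have "q dvd v + s"
    using q(1) by (simp add: dvd_eq_mod_eq_0 less_imp_le)
  have unique_s: "s' = s" if "s' \<in> S" "q dvd v + s'" for s'
  proof -
    have "[v + s' = v + s] (mod q)" using that(2) \<open>q dvd v + s\<close> by (simp add: cong_def dvd_eq_mod_eq_0)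
    then have "[s' = s] (mod q)" using cong_add_lcancel_nat by blast
    then have "s' mod q = s mod q" by (simp add: cong_def)
    then show ?thesis using inj that(1) s(1) by (auto dest: inj_onD)
  qed
  have adj: "circ_adj n S v c \<longleftrightarrow> (\<exists>s\<in>S. (v + s) mod n = c)" if "c < n" for c
    using circ_adj_iff[OF v that S] .
  show "\<exists>!c. c \<in> {c. c < n \<and> q dvd c} \<and> circ_adj n S v c"
  proof (rule ex1I[of _ "(v + s) mod n"])
    show "(v + s) mod n \<in> {c. c < n \<and> q dvd c} \<and> circ_adj n S v ((v + s) mod n)"
      using v s(1) \<open>q dvd v + s\<close> q(2) adj by (auto simp: dvd_mod)
  next
    fix c assume "c \<in> {c. c < n \<and> q dvd c} \<and> circ_adj n S v c"
    then obtain s' where "s' \<in> S" "(v + s') mod n = c" "q dvd c" using adj by auto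
    moreover from this have "q dvd v + s'" using q(2) by (metis dvd_mod_iff)
    ultimately show "c = (v + s) mod n" using unique_s by blast
  qed
qed

lemma not_dvd_div_exact_power:
  fixes p n :: nat
  assumes "p ^ l dvd n" "\<not> p ^ (l + 1) dvd n"
  shows "\<not> p dvd n div p ^ l"
proof
  assume "p dvd n div p ^ l"
  then have "p ^ l * p dvd p ^ l * (n div p ^ l)" by simp
  then show False using assms by (simp add: mult.commute)
qed

theorem theorem1p4:
  fixes n l p :: nat and S :: "nat set"
  assumes "0 < n" and "0 < l" and "prime p"
    and "p ^ l dvd n" and "\<not> p ^ (l + 1) dvd n"
    and "connection_set n S" and "card S = p ^ l"
    and "circ_connected n S"
  shows "(\<exists>C. is_total_perfect_code n S C) \<longleftrightarrow>
         (\<forall>s\<in>S. \<forall>s'\<in>S. s \<noteq> s' \<longrightarrow> s mod p ^ l \<noteq> s' mod p ^ l)"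
proof -
  have S: "S \<subseteq> {0..<n}" and fin_S: "finite S"
    using assms(6) finite_subset by (auto simp: connection_set_def)
  have coprime: "\<not> p dvd n div p ^ l"
    using assms(4,5) by (rule not_dvd_div_exact_power)
  have q: "0 < p ^ l" using assms(3) by (simp add: prime_gt_0_nat)
  have "(\<exists>C. is_total_perfect_code n S C) \<longleftrightarrow> inj_on (\<lambda>s. s mod p ^ l) S"
  proof
    assume "\<exists>C. is_total_perfect_code n S C"
    then obtain C where C: "is_total_perfect_code n S C" ..
    then have "finite C" by (auto simp: is_total_perfect_code_def intro: finite_subset)
    with C have "\<exists>c\<in>C. \<exists>s\<in>S. (p ^ l * c + s) mod n = g" if "g < n" for g
      using tiles_dilated_covers[OF assms(3) coprime total_perfect_code_tiles[OF assms(6)]]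
        fin_S assms(7) that by blast
    then show "inj_on (\<lambda>s. s mod p ^ l) S"
      using inj_on_mod_if_dilated_covers[OF assms(1,4) fin_S assms(7)] by blast
  next
    assume "inj_on (\<lambda>s. s mod p ^ l) S"
    then show "\<exists>C. is_total_perfect_code n S C"
      using multiples_total_perfect_code[OF S q assms(4) _ assms(7)] by blast
  qed
  then show ?thesis by (auto simp: inj_on_def)
qed

end
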